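(* Let $n\geq 3$ and let $\rho: B_n \rightarrow GL_n(\mathbb{C})$ be a non-trivial homogeneous $2$-local representation of $B_n$. Let $\hat{\rho}: SM_n \rightarrow M_n(\mathbb{C})$ be a $\Phi$-type extension of $\rho$ to $SM_n$. Then $\hat{\rho}$ is equivalent to one of the following three representations, where for $1\le i\le n-1$ and $X\in M_2(\mathbb{C})$, $s\in\mathbb{C}$ we write $E_i(s;X)=\mathrm{diag}(sI_{i-1},X,sI_{n-i-1})$ and $D_i(X)=E_i(1;X)$: (1) $\hat{\rho}_1(\sigma_i)=D_i\begin{pmatrix} a&\frac{1-a}{c}\\ c&0\end{pmatrix}$ and $\hat{\rho}_1(\tau_i)=E_i\left(u+v+w;\begin{pmatrix} ua+w & \frac{u(1-a)+v}{c}\\ uc+\frac{vc}{1-a} & \frac{-va}{1-a}+w\end{pmatrix}\right)$, where $a,c,u,v,w\in\mathbb{C}$, $a\neq 1$, $c\neq 0$; (2) $\hat{\rho}_2(\sigma_i)=D_i\begin{pmatrix} 0&\frac{1-d}{c}\\ c&d\end{pmatrix}$ and $\hat{\rho}_2(\tau_i)=E_i\left(u+v+w;\begin{pmatrix} \frac{-vd}{1-d}+w & \frac{u(1-d)+v}{c}\\ uc+\frac{vc}{1-d} & ud+w\end{pmatrix}\right)$, where $c,d,u,v,w\in\mathbb{C}$, $d\neq 1$, $c\neq 0$; (3) $\hat{\rho}_3(\sigma_i)=D_i\begin{pmatrix} 0&b\\ c&0\end{pmatrix}$ and $\hat{\rho}_3(\tau_i)=E_i\left(u+v+w;\begin{pmatrix}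 w & ub+\frac{v}{c}\\ uc+\frac{v}{b} & w\end{pmatrix}\right)$, where $b,c,u,v,w\in\mathbb{C}$, $b\neq 0$, $c\neq 0$; in each case for all $1\le i\le n-1$.
   Context: The braid group $B_n$ has generators $\sigma_1,\dots,\sigma_{n-1}$ with relations $\sigma_i\sigma_{i+1}\sigma_i=\sigma_{i+1}\sigma_i\sigma_{i+1}$ ($1\le i\le n-2$) and $\sigma_i\sigma_j=\sigma_j\sigma_i$ ($|i-j|\ge2$). The singular braid monoid $SM_n$ is the monoid generated by $\sigma_1^{\pm1},\dots,\sigma_{n-1}^{\pm1},\tau_1,\dots,\tau_{n-1}$ subject to $\sigma_i\sigma_i^{-1}=\sigma_i^{-1}\sigma_i=1$, the braid relations above, and $\tau_i\tau_j=\tau_j\tau_i$, $\tau_i\sigma_j=\sigma_j\tau_i$ for $|i-j|\ge 2$, $\tau_i\sigma_i=\sigma_i\tau_i$, and $\sigma_i\sigma_{i+1}\tau_i=\tau_{i+1}\sigma_i\sigma_{i+1}$, $\sigma_{i+1}\sigma_i\tau_{i+1}=\tau_i\sigma_{i+1}\sigma_i$ for $1\le i\le n-2$. A representation $\rho:B_n\to GL_n(\mathbb{C})$ is homogeneous $2$-local if there is $M\in M_2(\mathbb{C})$ with $\rho(\sigma_i)=\mathrm{diag}(I_{i-1},M,I_{n-i-1})$ for all $1\le i\le n-1$; "non-trivial" means not sending every $\sigma_i$ to the identity. A $\Phi$-type extension of $\rho$ to $SM_n$ is a monoid homomorphism $\hat\rho:SM_n\to M_n(\mathbb{C})$ for which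 there exist $u,v,w\in\mathbb{C}$ with $\hat\rho(\sigma_i^{\pm1})=\rho(\sigma_i)^{\pm1}$ and $\hat\rho(\tau_i)=u\rho(\sigma_i)+v\rho(\sigma_i)^{-1}+wI_n$ for all $1\le i\le n-1$ (any such choice of $u,v,w$ defines a representation of $SM_n$). Two representations are equivalent if they are conjugate by a fixed invertible matrix. *)

theory Defs
  imports "Jordan_Normal_Form.Matrix"
begin

text \<open>Matrices are Jordan_Normal_Form matrices; row/column indices are 0-based,
  so the 2x2 block of the i-th generator (1 <= i <= n-1) sits in rows/columns i-1, i.\<close>

text \<open>E_i(s;X) = diag(s I_{i-1}, X, s I_{n-i-1}) as an n x n matrix.\<close>
definition blockE :: "nat \<Rightarrow> nat \<Rightarrow> complex \<Rightarrow> complex mat \<Rightarrow> complex mat" where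
  "blockE n i s X = mat n n (\<lambda>(r, c).
     if i - 1 \<le> r \<and> r \<le> i \<and> i - 1 \<le> c \<and> c \<le> i then X $$ (r - (i - 1), c - (i - 1))
     else if r = c then s else 0)"

definition blockD :: "nat \<Rightarrow> nat \<Rightarrow> complex mat \<Rightarrow> complex mat" where
  "blockD n i X = blockE n i 1 X"

definition minv :: "nat \<Rightarrow> complex mat \<Rightarrow> complex mat" where
  "minv n A = (SOME B. B \<in> carrier_mat n n \<and> A * B = 1\<^sub>m n \<and> B * A = 1\<^sub>m n)"

definition mat2 :: "complex \<Rightarrow> complex \<Rightarrow> complex \<Rightarrow> complex \<Rightarrow> complex mat" where
  "mat2 a b c d = mat 2 2 (\<lambda>(r, s). if r = 0 then (if s = 0 then a else b) else (if s = 0 then c else d))"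

text \<open>A representation B_n -> GL_n(C), given (via the standard presentation of B_n)
  by the images S i of the generators sigma_i, 1 <= i <= n-1: invertible n x n matrices
  satisfying the braid relations.\<close>
definition braid_rep :: "nat \<Rightarrow> (nat \<Rightarrow> complex mat) \<Rightarrow> bool" where
  "braid_rep n S \<longleftrightarrow>
     (\<forall>i\<in>{1..n-1}. S i \<in> carrier_mat n n \<and> invertible_mat (S i)) \<and>
     (\<forall>i\<in>{1..n-2}. S i * S (i+1) * S i = S (i+1) * S i * S (i+1)) \<and>
     (\<forall>i\<in>{1..n-1}. \<forall>j\<in>{1..n-1}. (i \<ge> j + 2 \<or> j \<ge> i + 2) \<longrightarrow> S i * S j = S j * S i)"

text \<open>Homogeneous 2-local: a single 2x2 matrix M with rho(sigma_i) = diag(I_{i-1}, M, I_{n-i-1}).\<close>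
definition hom_2local :: "nat \<Rightarrow> (nat \<Rightarrow> complex mat) \<Rightarrow> bool" where
  "hom_2local n S \<longleftrightarrow> (\<exists>M \<in> carrier_mat 2 2. \<forall>i\<in>{1..n-1}. S i = blockD n i M)"

definition nontrivial_rep :: "nat \<Rightarrow> (nat \<Rightarrow> complex mat) \<Rightarrow> bool" where
  "nontrivial_rep n S \<longleftrightarrow> (\<exists>i\<in>{1..n-1}. S i \<noteq> 1\<^sub>m n)"

definition phi_tau :: "nat \<Rightarrow> (nat \<Rightarrow> complex mat) \<Rightarrow> complex \<Rightarrow> complex \<Rightarrow> complex \<Rightarrow> nat \<Rightarrow> complex mat" where
  "phi_tau n S u v w i = u \<cdot>\<^sub>m S i + v \<cdot>\<^sub>m minv n (S i) + w \<cdot>\<^sub>m 1\<^sub>m n"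

text \<open>Two representations of SM_n, given by images (Sg, Sginv, Tg) of the generators
  sigma_i, sigma_i^{-1}, tau_i, are equivalent if conjugate by one fixed invertible matrix.\<close>
definition equiv_SM :: "nat \<Rightarrow> (nat \<Rightarrow> complex mat) \<Rightarrow> (nat \<Rightarrow> complex mat) \<Rightarrow> (nat \<Rightarrow> complex mat)
     \<Rightarrow> (nat \<Rightarrow> complex mat) \<Rightarrow> (nat \<Rightarrow> complex mat) \<Rightarrow> (nat \<Rightarrow> complex mat) \<Rightarrow> bool" where
  "equiv_SM n S1 S1i T1 S2 S2i T2 \<longleftrightarrow>
     (\<exists>P \<in> carrier_mat n n. \<exists>Q \<in> carrier_mat n n. P * Q = 1\<^sub>m n \<and> Q * P = 1\<^sub>m n \<and>
        (\<forall>i\<in>{1..n-1}. P * S1 i * Q = S2 i \<and> P * S1i i * Q = S2i i \<and> P * T1 i * Q = T2 i))"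

end

theory Submission
  imports Defs
begin

text \<open>Write \<open>\<rho>(\<sigma>\<^sub>i) = D\<^sub>i(M)\<close> with \<open>M = [[a, b], [c, d]]\<close>. The braid relation between
  \<open>D\<^sub>1(M)\<close> and \<open>D\<^sub>2(M)\<close> only involves the leading 3x3 block; four of its entries give
  \<open>a(a + bc - 1) = abd = acd = d(bc + d - 1) = 0\<close>, and invertibility of \<open>D\<^sub>1(M)\<close> gives
  \<open>ad - bc \<noteq> 0\<close>. If \<open>a\<close> and \<open>d\<close> are both nonzero these equations force \<open>M = I\<close>, i.e. a
  trivial \<open>\<rho>\<close>; otherwise \<open>d = 0\<close>, or \<open>a = 0\<close>, or both, which are exactly the shapes of
  \<open>M\<close> in the three families. Finally \<open>u D\<^sub>i(M) + v D\<^sub>i(M)\<^sup>-\<^sup>1 + w I = E\<^sub>i(u + v + w; u M + v M\<^sup>-\<^sup>1 + w I)\<close>,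
  and expanding \<open>M\<^sup>-\<^sup>1\<close> shows that the \<open>\<Phi>\<close>-type extension is literally the listed
  representation with the same \<open>u, v, w\<close>, so the conjugating matrix is the identity.\<close>

lemma blockE_carrier [simp]: "blockE n i s X \<in> carrier_mat n n"
  and blockE_dims [simp]: "dim_row (blockE n i s X) = n" "dim_col (blockE n i s X) = n"
  by (auto simp: blockE_def)

lemma blockE_mult_carrier [simp]: "B \<in> carrier_mat n m \<Longrightarrow> blockE n i s X * B \<in> carrier_mat n m"
  by (rule mult_carrier_mat[OF blockE_carrier])

lemma blockE_index:
  "r < n \<Longrightarrow> c < n \<Longrightarrow> blockE n i s X $$ (r, c) =
    (if i - 1 \<le> r \<and> r \<le> i \<and> i - 1 \<le> c \<and> c \<le> i then X $$ (r - (i - 1), c - (i - 1))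
     else if r = c then s else 0)"
  by (simp add: blockE_def)

lemma blockE_index_block:
  "i - 1 \<le> r \<Longrightarrow> r \<le> i \<Longrightarrow> i - 1 \<le> c \<Longrightarrow> c \<le> i \<Longrightarrow> r < n \<Longrightarrow> c < n \<Longrightarrow>
    blockE n i s X $$ (r, c) = X $$ (r - (i - 1), c - (i - 1))"
  by (simp add: blockE_index)

lemma blockE_index_off_block:
  "\<not> (i - 1 \<le> r \<and> r \<le> i \<and> i - 1 \<le> c \<and> c \<le> i) \<Longrightarrow> r < n \<Longrightarrow> c < n \<Longrightarrow>
    blockE n i s X $$ (r, c) = (if r = c then s else 0)"
  by (simp only: blockE_index if_False)

lemma blockE_eqI:
  assumes "A \<in> carrier_mat n n"
    and "\<And>r c. i - 1 \<le> r \<Longrightarrow> r \<le> i \<Longrightarrow> i - 1 \<le> c \<Longrightarrow> c \<le> i \<Longrightarrow> r < n \<Longrightarrow> c < n \<Longrightarrow>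
           r - (i - 1) < 2 \<Longrightarrow> c - (i - 1) < 2 \<Longrightarrow> A $$ (r, c) = X $$ (r - (i - 1), c - (i - 1))"
    and "\<And>r c. \<not> (i - 1 \<le> r \<and> r \<le> i \<and> i - 1 \<le> c \<and> c \<le> i) \<Longrightarrow> r < n \<Longrightarrow> c < n \<Longrightarrow>
           A $$ (r, c) = (if r = c then s else 0)"
  shows "A = blockE n i s X"
proof (rule eq_matI)
  fix r c
  assume "r < dim_row (blockE n i s X)" "c < dim_col (blockE n i s X)"
  then have rc: "r < n" "c < n"
    by simp_all
  show "A $$ (r, c) = blockE n i s X $$ (r, c)"
  proof (cases "i - 1 \<le> r \<and> r \<le> i \<and> i - 1 \<le> c \<and> c \<le> i")
    case True
    then have "r - (i - 1) < 2" "c - (i - 1) < 2"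
      by linarith+
    with True rc show ?thesis
      using assms(2) blockE_index_block by simp
  next
    case False
    with rc show ?thesis
      using assms(3) blockE_index_off_block by simp
  qed
qed (use assms(1) in simp_all)

lemma blockE_add:
  assumes "X \<in> carrier_mat 2 2" "Y \<in> carrier_mat 2 2"
  shows "blockE n i s X + blockE n i t Y = blockE n i (s + t) (X + Y)"
  by (rule blockE_eqI) (use assms in \<open>simp_all add: blockE_index_block blockE_index_off_block\<close>)

lemma smult_blockE:
  assumes "X \<in> carrier_mat 2 2"
  shows "u \<cdot>\<^sub>m blockE n i s X = blockE n i (u * s) (u \<cdot>\<^sub>m X)"
  by (rule blockE_eqI) (use assms in \<open>simp_all add: blockE_index_block blockE_index_off_block\<close>)

lemma blockE_one: "1 \<le> i \<Longrightarrow> blockE n i 1 (1\<^sub>m 2) = 1\<^sub>m n"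
  by (rule sym, rule blockE_eqI) auto

lemma blockE_mult_index:
  assumes i: "1 \<le> i" "i < n" and B: "B \<in> carrier_mat n n" and r: "r < n" and q: "q < n"
  shows "(blockE n i s X * B) $$ (r, q) =
    (if i - 1 \<le> r \<and> r \<le> i
     then X $$ (r - (i - 1), 0) * B $$ (i - 1, q) + X $$ (r - (i - 1), 1) * B $$ (i, q)
     else s * B $$ (r, q))"
proof -
  define f where "f k = blockE n i s X $$ (r, k) * B $$ (k, q)" for k
  have prod: "(blockE n i s X * B) $$ (r, q) = (\<Sum>k<n. f k)"
    using B r q by (simp add: f_def scalar_prod_def lessThan_atLeast0)
  show ?thesis
  proof (cases "i - 1 \<le> r \<and> r \<le> i")
    case True
    have "(\<Sum>k<n. f k) = (\<Sum>k\<in>{i - 1, i}. f k)"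
      by (rule sum.mono_neutral_right) (use i True r in \<open>auto simp: f_def blockE_index\<close>)
    also have "\<dots> = f (i - 1) + f i"
      using i by simp
    finally show ?thesis
      using True i r by (simp add: prod f_def blockE_index)
  next
    case False
    have "(\<Sum>k<n. f k) = (\<Sum>k\<in>{r}. f k)"
      by (rule sum.mono_neutral_right) (use False r in \<open>auto simp: f_def blockE_index\<close>)
    also have "\<dots> = s * B $$ (r, q)"
      using False r by (simp add: f_def blockE_index_off_block)
    finally show ?thesis
      unfolding prod if_not_P[OF False] .
  qed
qed

lemma blockE_mult:
  assumes i: "1 \<le> i" "i < n" and X: "X \<in> carrier_mat 2 2" and Y: "Y \<in> carrier_mat 2 2"
  shows "blockE n i s X * blockE n i t Y = blockE n i (s * t) (X * Y)"
proof (rule blockE_eqI)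
  have XY: "(X * Y) $$ (p, p') = X $$ (p, 0) * Y $$ (0, p') + X $$ (p, 1) * Y $$ (1, p')"
    if "p < 2" "p' < 2" for p p'
    using X Y that by (simp add: scalar_prod_def numeral_2_eq_2)
  have i1: "i - (i - 1) = 1"
    using i by simp
  fix r c
  assume "r < n" "c < n"
  then have prod: "(blockE n i s X * blockE n i t Y) $$ (r, c) =
    (if i - 1 \<le> r \<and> r \<le> i
     then X $$ (r - (i - 1), 0) * blockE n i t Y $$ (i - 1, c) +
          X $$ (r - (i - 1), 1) * blockE n i t Y $$ (i, c)
     else s * blockE n i t Y $$ (r, c))"
    using i by (intro blockE_mult_index) simp_all
  show "(blockE n i s X * blockE n i t Y) $$ (r, c) = (X * Y) $$ (r - (i - 1), c - (i - 1))"
    if "i - 1 \<le> r" "r \<le> i" "i - 1 \<le> c" "c \<le> i" "r - (i - 1) < 2" "c - (i - 1) < 2"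
    using that i \<open>c < n\<close> by (simp add: prod blockE_index_block XY i1)
  show "(blockE n i s X * blockE n i t Y) $$ (r, c) = (if r = c then s * t else 0)"
    if "\<not> (i - 1 \<le> r \<and> r \<le> i \<and> i - 1 \<le> c \<and> c \<le> i)"
    using that i \<open>r < n\<close> \<open>c < n\<close> by (auto simp: prod blockE_index)
qed simp

lemma blockD_carrier [simp]: "blockD n i X \<in> carrier_mat n n"
  and blockD_dims [simp]: "dim_row (blockD n i X) = n" "dim_col (blockD n i X) = n"
  by (simp_all add: blockD_def)

lemma blockD_one: "1 \<le> i \<Longrightarrow> blockD n i (1\<^sub>m 2) = 1\<^sub>m n"
  by (simp add: blockD_def blockE_one)

lemma minv_eqI:
  assumes A: "A \<in> carrier_mat n n" and B: "B \<in> carrier_mat n n"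
    and AB: "A * B = 1\<^sub>m n" and BA: "B * A = 1\<^sub>m n"
  shows "minv n A = B"
proof -
  have "\<exists>B. B \<in> carrier_mat n n \<and> A * B = 1\<^sub>m n \<and> B * A = 1\<^sub>m n"
    using B AB BA by blast
  then have C: "minv n A \<in> carrier_mat n n" "minv n A * A = 1\<^sub>m n"
    unfolding minv_def by (metis (mono_tags, lifting) someI_ex)+
  have "minv n A = minv n A * (A * B)"
    using C(1) by (simp add: AB)
  also have "\<dots> = (minv n A * A) * B"
    using A B C(1) by (simp add: assoc_mult_mat)
  also have "\<dots> = B"
    using B by (simp add: C(2))
  finally show ?thesis .
qed

lemma minv_blockD:
  assumes i: "1 \<le> i" "i < n" and M: "M \<in> carrier_mat 2 2" and N: "N \<in> carrier_mat 2 2"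
    and MN: "M * N = 1\<^sub>m 2" and NM: "N * M = 1\<^sub>m 2"
  shows "minv n (blockD n i M) = blockD n i N"
  by (rule minv_eqI) (use assms in \<open>simp_all add: blockD_def blockE_mult blockE_one\<close>)

lemma mat2_carrier [simp]: "mat2 a b c d \<in> carrier_mat 2 2"
  by (simp add: mat2_def)

lemma mat2_index [simp]:
  "mat2 a b c d $$ (0, 0) = a" "mat2 a b c d $$ (0, 1) = b"
  "mat2 a b c d $$ (1, 0) = c" "mat2 a b c d $$ (1, 1) = d"
  "mat2 a b c d $$ (0, Suc 0) = b" "mat2 a b c d $$ (Suc 0, 0) = c" "mat2 a b c d $$ (Suc 0, Suc 0) = d"
  "dim_row (mat2 a b c d) = 2" "dim_col (mat2 a b c d) = 2"
  by (simp_all add: mat2_def)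

lemma mat2_eq_iff: "mat2 a b c d = mat2 a' b' c' d' \<longleftrightarrow> a = a' \<and> b = b' \<and> c = c' \<and> d = d'"
  by (metis mat2_index(1-4))

lemma mat2_eta:
  "X \<in> carrier_mat 2 2 \<Longrightarrow> X = mat2 (X $$ (0, 0)) (X $$ (0, 1)) (X $$ (1, 0)) (X $$ (1, 1))"
  by (rule eq_matI) (auto simp: mat2_def less_2_cases_iff)

lemma one_mat_2: "1\<^sub>m 2 = mat2 1 0 0 1"
  by (rule eq_matI) (auto simp: less_2_cases_iff)

lemma mat2_mult:
  "mat2 a b c d * mat2 a' b' c' d' = mat2 (a * a' + b * c') (a * b' + b * d') (c * a' + d * c') (c * b' + d * d')"
  by (rule eq_matI) (auto simp: scalar_prod_def numeral_2_eq_2 less_Suc_eq)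

lemma mat2_lincomb:
  "u \<cdot>\<^sub>m mat2 a b c d + v \<cdot>\<^sub>m mat2 a' b' c' d' + w \<cdot>\<^sub>m 1\<^sub>m 2 =
    mat2 (u * a + v * a' + w) (u * b + v * b') (u * c + v * c') (u * d + v * d' + w)"
  by (rule eq_matI) (auto simp: less_2_cases_iff)

lemma mat2_inverse:
  fixes a b c d :: complex
  assumes "a * d - b * c \<noteq> 0"
  defines "\<Delta> \<equiv> a * d - b * c"
  shows "mat2 a b c d * mat2 (d / \<Delta>) (- b / \<Delta>) (- c / \<Delta>) (a / \<Delta>) = 1\<^sub>m 2"
    and "mat2 (d / \<Delta>) (- b / \<Delta>) (- c / \<Delta>) (a / \<Delta>) * mat2 a b c d = 1\<^sub>m 2"
  using assms by (simp_all add: mat2_mult one_mat_2 mat2_eq_iff add_divide_distrib[symmetric]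
      diff_divide_distrib[symmetric] algebra_simps)

lemma blockD_braid_relation_eqs:
  assumes n: "3 \<le> n"
    and braid: "blockD n 1 (mat2 a b c d) * blockD n 2 (mat2 a b c d) * blockD n 1 (mat2 a b c d) =
                blockD n 2 (mat2 a b c d) * blockD n 1 (mat2 a b c d) * blockD n 2 (mat2 a b c d)"
  shows "a * (a + b * c - 1) = 0" "a * b * d = 0" "a * c * d = 0" "d * (b * c + d - 1) = 0"
proof -
  let ?D1 = "blockE n 1 1 (mat2 a b c d)" and ?D2 = "blockE n 2 1 (mat2 a b c d)"
  \<comment> \<open>associated to the right, every product has a block matrix as left factor,
    so \<open>blockE_mult_index\<close> evaluates its entries\<close>
  have "?D1 * (?D2 * ?D1) = ?D2 * (?D1 * ?D2)"
    using braid by (simp add: blockD_def assoc_mult_mat[of _ n n _ n _ n, symmetric])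
  then have entry: "(?D1 * (?D2 * ?D1)) $$ (r, s) = (?D2 * (?D1 * ?D2)) $$ (r, s)" for r s
    by simp
  note eval = blockE_mult_index blockE_index algebra_simps
  show "a * (a + b * c - 1) = 0"
    using entry[of 0 0] n by (simp del: index_mult_mat add: eval)
  show "a * b * d = 0"
    using entry[of 0 1] n by (simp del: index_mult_mat add: eval)
  show "a * c * d = 0"
    using entry[of 1 0] n by (simp del: index_mult_mat add: eval)
  show "d * (b * c + d - 1) = 0"
    using entry[of 2 2] n by (simp del: index_mult_mat add: eval)
qed

lemma blockD_invertible_det_nonzero:
  assumes i: "1 \<le> i" "i < n" and inv: "invertible_mat (blockD n i (mat2 a b c d))"
  shows "a * d - b * c \<noteq> 0"
proof -
  define D where "D = blockE n i 1 (mat2 a b c d)"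
  obtain B where DB: "D * B = 1\<^sub>m n" and BD: "B * D = 1\<^sub>m (dim_row B)"
    using inv unfolding D_def blockD_def invertible_mat_def inverts_mat_def by auto
  have B: "B \<in> carrier_mat n n"
    using DB BD unfolding D_def
    by (metis blockE_dims carrier_matI index_mult_mat(2,3) index_one_mat(2,3))
  have entry: "(D * B) $$ (r, q) = (if r = q then 1 else 0)" if "r < n" "q < n" for r q
    using DB that by simp
  have i1: "i - 1 < n" "i - (i - 1) = 1"
    using i by simp_all
  define e f g h where "e = B $$ (i - 1, i - 1)" and "f = B $$ (i - 1, i)"
    and "g = B $$ (i, i - 1)" and "h = B $$ (i, i)"
  have "a * e + b * g = 1" "a * f + b * h = 0" "c * e + d * g = 0" "c * f + d * h = 1"
    using entry[of "i - 1" "i - 1"] entry[of "i - 1" i] entry[of i "i - 1"] entry[of i i] i i1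
    by (simp_all add: D_def blockE_mult_index B e_def f_def g_def h_def)
  \<comment> \<open>\<open>[[e, f], [g, h]]\<close> is a right inverse of \<open>M\<close>; compare determinants\<close>
  moreover have "(a * d - b * c) * (e * h - f * g) =
      (a * e + b * g) * (c * f + d * h) - (a * f + b * h) * (c * e + d * g)"
    by (simp add: algebra_simps)
  ultimately have "(a * d - b * c) * (e * h - f * g) = 1"
    by simp
  then show ?thesis
    by auto
qed

lemma braid_mat2_cases:
  fixes a b c d :: complex
  assumes e1: "a * (a + b * c - 1) = 0" and e2: "a * b * d = 0" and e3: "a * c * d = 0"
    and e4: "d * (b * c + d - 1) = 0"
    and det: "a * d - b * c \<noteq> 0" and nonid: "mat2 a b c d \<noteq> 1\<^sub>m 2"
  obtains "d = 0" "c \<noteq> 0" "a \<noteq> 1" "b = (1 - a) / c"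
    | "a = 0" "c \<noteq> 0" "d \<noteq> 1" "b = (1 - d) / c"
    | "a = 0" "d = 0" "b \<noteq> 0" "c \<noteq> 0"
proof -
  consider "a \<noteq> 0" "d \<noteq> 0" | "a \<noteq> 0" "d = 0" | "a = 0" "d \<noteq> 0" | "a = 0" "d = 0"
    by blast
  then show ?thesis
  proof cases
    case 1
    then have "b = 0" "c = 0"
      using e2 e3 by simp_all
    with 1 e1 e4 have "a = 1" "d = 1"
      by simp_all
    with \<open>b = 0\<close> \<open>c = 0\<close> nonid show ?thesis
      by (simp add: one_mat_2)
  next
    case 2
    with e1 have "a + b * c - 1 = 0"
      by simp
    with 2 det have "b * c = 1 - a" "c \<noteq> 0" "b \<noteq> 0"
      by (simp_all add: field_simps)
    then have "a \<noteq> 1" "b = (1 - a) / c"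
      by (auto simp: field_simps)
    with 2 \<open>c \<noteq> 0\<close> show ?thesis
      by (intro that(1))
  next
    case 3
    with e4 have "b * c + d - 1 = 0"
      by simp
    with 3 det have "b * c = 1 - d" "c \<noteq> 0" "b \<noteq> 0"
      by (simp_all add: field_simps)
    then have "d \<noteq> 1" "b = (1 - d) / c"
      by (auto simp: field_simps)
    with 3 \<open>c \<noteq> 0\<close> show ?thesis
      by (intro that(2))
  next
    case 4
    with det that(3) show ?thesis
      by simp
  qed
qed

lemma phi_tau_blockD:
  assumes i: "1 \<le> i" "i < n" and S: "S i = blockD n i M"
    and M: "M \<in> carrier_mat 2 2" and N: "N \<in> carrier_mat 2 2"
    and MN: "M * N = 1\<^sub>m 2" and NM: "N * M = 1\<^sub>m 2"
  shows "phi_tau n S u v w i = blockE n i (u + v + w) (u \<cdot>\<^sub>m M + v \<cdot>\<^sub>m N + w \<cdot>\<^sub>m 1\<^sub>m 2)"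
  unfolding phi_tau_def S minv_blockD[OF i M N MN NM]
  unfolding blockE_one[OF i(1), of n, symmetric] blockD_def
  using M N by (simp add: smult_blockE blockE_add)

lemma equiv_SM_phi_tau_blockD:
  assumes S: "\<forall>i\<in>{1..n-1}. S i = blockD n i M"
    and M: "M \<in> carrier_mat 2 2" and N: "N \<in> carrier_mat 2 2"
    and MN: "M * N = 1\<^sub>m 2" and NM: "N * M = 1\<^sub>m 2"
  shows "equiv_SM n S (\<lambda>i. minv n (S i)) (phi_tau n S u v w)
    (\<lambda>i. blockD n i M) (\<lambda>i. minv n (blockD n i M))
    (\<lambda>i. blockE n i (u + v + w) (u \<cdot>\<^sub>m M + v \<cdot>\<^sub>m N + w \<cdot>\<^sub>m 1\<^sub>m 2))"
  unfolding equiv_SM_def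
proof (intro bexI conjI ballI)
  fix i
  assume "i \<in> {1..n-1}"
  then have i: "1 \<le> i" "i < n" and Si: "S i = blockD n i M"
    using S by auto
  show "1\<^sub>m n * S i * 1\<^sub>m n = blockD n i M"
    using Si by simp
  show "1\<^sub>m n * minv n (S i) * 1\<^sub>m n = minv n (blockD n i M)"
    using Si by (simp add: minv_blockD[OF i M N MN NM])
  show "1\<^sub>m n * phi_tau n S u v w i * 1\<^sub>m n =
      blockE n i (u + v + w) (u \<cdot>\<^sub>m M + v \<cdot>\<^sub>m N + w \<cdot>\<^sub>m 1\<^sub>m 2)"
    by (simp add: phi_tau_blockD[where S = S, OF i Si M N MN NM])
qed simp_all

lemma equiv_SM_phi_tau_mat2:
  assumes S: "\<forall>i\<in>{1..n-1}. S i = blockD n i (mat2 a b c d)" and det: "a * d - b * c \<noteq> 0"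
    and Z: "Z = mat2 (u * a + v * d / (a * d - b * c) + w) (u * b - v * b / (a * d - b * c))
                     (u * c - v * c / (a * d - b * c)) (u * d + v * a / (a * d - b * c) + w)"
  shows "equiv_SM n S (\<lambda>i. minv n (S i)) (phi_tau n S u v w)
    (\<lambda>i. blockD n i (mat2 a b c d)) (\<lambda>i. minv n (blockD n i (mat2 a b c d)))
    (\<lambda>i. blockE n i (u + v + w) Z)"
  using equiv_SM_phi_tau_blockD[OF S mat2_carrier mat2_carrier mat2_inverse[OF det], of u v w] Z
  by (simp add: mat2_lincomb)

lemma equiv_SM_phi_tau_rho1:
  assumes "\<forall>i\<in>{1..n-1}. S i = blockD n i (mat2 a ((1 - a) / c) c 0)" and "a \<noteq> 1" "c \<noteq> 0"
  shows "equiv_SM n S (\<lambda>i. minv n (S i)) (phi_tau n S u v w)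
    (\<lambda>i. blockD n i (mat2 a ((1 - a) / c) c 0))
    (\<lambda>i. minv n (blockD n i (mat2 a ((1 - a) / c) c 0)))
    (\<lambda>i. blockE n i (u + v + w)
       (mat2 (u * a + w) ((u * (1 - a) + v) / c) (u * c + v * c / (1 - a)) (- v * a / (1 - a) + w)))"
proof -
  have "1 - a \<noteq> 0"
    using assms(2) by simp
  with assms show ?thesis
    by (intro equiv_SM_phi_tau_mat2) (simp_all add: mat2_eq_iff field_simps)
qed

lemma equiv_SM_phi_tau_rho2:
  assumes "\<forall>i\<in>{1..n-1}. S i = blockD n i (mat2 0 ((1 - d) / c) c d)" and "d \<noteq> 1" "c \<noteq> 0"
  shows "equiv_SM n S (\<lambda>i. minv n (S i)) (phi_tau n S u v w)
    (\<lambda>i. blockD n i (mat2 0 ((1 - d) / c) c d))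
    (\<lambda>i. minv n (blockD n i (mat2 0 ((1 - d) / c) c d)))
    (\<lambda>i. blockE n i (u + v + w)
       (mat2 (- v * d / (1 - d) + w) ((u * (1 - d) + v) / c) (u * c + v * c / (1 - d)) (u * d + w)))"
proof -
  have "1 - d \<noteq> 0"
    using assms(2) by simp
  with assms show ?thesis
    by (intro equiv_SM_phi_tau_mat2) (simp_all add: mat2_eq_iff field_simps)
qed

lemma equiv_SM_phi_tau_rho3:
  assumes "\<forall>i\<in>{1..n-1}. S i = blockD n i (mat2 0 b c 0)" and "b \<noteq> 0" "c \<noteq> 0"
  shows "equiv_SM n S (\<lambda>i. minv n (S i)) (phi_tau n S u v w)
    (\<lambda>i. blockD n i (mat2 0 b c 0))
    (\<lambda>i. minv n (blockD n i (mat2 0 b c 0)))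
    (\<lambda>i. blockE n i (u + v + w) (mat2 w (u * b + v / c) (u * c + v / b) w))"
  using assms by (intro equiv_SM_phi_tau_mat2) (simp_all add: mat2_eq_iff field_simps)

theorem theorem3p5:
  fixes n :: nat and S :: "nat \<Rightarrow> complex mat" and u v w :: complex
  assumes "n \<ge> 3"
    and "braid_rep n S" and "hom_2local n S" and "nontrivial_rep n S"
  shows "(\<exists>a c u' v' w'. a \<noteq> 1 \<and> c \<noteq> 0 \<and>
            equiv_SM n S (\<lambda>i. minv n (S i)) (phi_tau n S u v w)
              (\<lambda>i. blockD n i (mat2 a ((1 - a) / c) c 0))
              (\<lambda>i. minv n (blockD n i (mat2 a ((1 - a) / c) c 0)))
              (\<lambda>i. blockE n i (u' + v' + w')
                     (mat2 (u' * a + w') ((u' * (1 - a) + v') / c)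
                           (u' * c + v' * c / (1 - a)) (- v' * a / (1 - a) + w'))))
       \<or> (\<exists>c d u' v' w'. d \<noteq> 1 \<and> c \<noteq> 0 \<and>
            equiv_SM n S (\<lambda>i. minv n (S i)) (phi_tau n S u v w)
              (\<lambda>i. blockD n i (mat2 0 ((1 - d) / c) c d))
              (\<lambda>i. minv n (blockD n i (mat2 0 ((1 - d) / c) c d)))
              (\<lambda>i. blockE n i (u' + v' + w')
                     (mat2 (- v' * d / (1 - d) + w') ((u' * (1 - d) + v') / c)
                           (u' * c + v' * c / (1 - d)) (u' * d + w'))))
       \<or> (\<exists>b c u' v' w'. b \<noteq> 0 \<and> c \<noteq> 0 \<and>
            equiv_SM n S (\<lambda>i. minv n (S i)) (phi_tau n S u v w)
              (\<lambda>i. blockD n i (mat2 0 b c 0))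
              (\<lambda>i. minv n (blockD n i (mat2 0 b c 0)))
              (\<lambda>i. blockE n i (u' + v' + w')
                     (mat2 w' (u' * b + v' / c) (u' * c + v' / b) w')))"
proof -
  obtain M where "M \<in> carrier_mat 2 2" "\<forall>i\<in>{1..n-1}. S i = blockD n i M"
    using assms(3) unfolding hom_2local_def by blast
  then obtain a b c d where S: "\<forall>i\<in>{1..n-1}. S i = blockD n i (mat2 a b c d)"
    using mat2_eta by metis
  have "S 1 * S 2 * S 1 = S 2 * S 1 * S 2"
    using assms(1,2) bspec[of _ _ 1] unfolding braid_rep_def by (simp add: numeral_2_eq_2)
  then have braid: "blockD n 1 (mat2 a b c d) * blockD n 2 (mat2 a b c d) * blockD n 1 (mat2 a b c d) =
                    blockD n 2 (mat2 a b c d) * blockD n 1 (mat2 a b c d) * blockD n 2 (mat2 a b c d)"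
    using S assms(1) by simp
  have "invertible_mat (S 1)"
    using assms(1,2) unfolding braid_rep_def by simp
  then have det: "a * d - b * c \<noteq> 0"
    using S assms(1) by (intro blockD_invertible_det_nonzero[of 1 n]) simp_all
  have "mat2 a b c d \<noteq> 1\<^sub>m 2"
    using S assms(4) blockD_one unfolding nontrivial_rep_def by fastforce
  from braid_mat2_cases[OF blockD_braid_relation_eqs[OF assms(1) braid] det this] show ?thesis
  proof cases
    case 1
    with S have "\<forall>i\<in>{1..n-1}. S i = blockD n i (mat2 a ((1 - a) / c) c 0)"
      by simp
    with 1 show ?thesis
      by (metis equiv_SM_phi_tau_rho1)
  next
    case 2
    with S have "\<forall>i\<in>{1..n-1}. S i = blockD n i (mat2 0 ((1 - d) / c) c d)"
      by simp
    with 2 show ?thesis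
      by (metis equiv_SM_phi_tau_rho2)
  next
    case 3
    with S have "\<forall>i\<in>{1..n-1}. S i = blockD n i (mat2 0 b c 0)"
      by simp
    with 3 show ?thesis
      by (metis equiv_SM_phi_tau_rho3)
  qed
qed

end
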